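(* For all nonnegative integers $k,l$, \[ \sum_{n=0}^\infty \frac{Q_l(H_n,H_n^{(2)},\dots,H_n^{(l)})\,P_k(H_n,H_n^{(2)},\dots,H_n^{(k)})}{(n+1)(n+2)} =\begin{cases} \displaystyle\sum_{j=0}^k\binom{k+l-j}{k+1-j}\zeta(k+l-j)-\zeta(l), & l\ge 2,\\[2ex] \displaystyle\sum_{j=0}^{k-1}\zeta(k+1-j)+1, & l=1,\\[2ex] 1, & l=0. \end{cases} \]
   Context: For integers $r\ge1$ and $n\ge0$, $H_n^{(r)}=\sum_{j=1}^n j^{-r}$ (so $H_0^{(r)}=0$), and $H_n=H_n^{(1)}$. The polynomials $P_n,Q_n\in\mathbb{Q}[y_1,\dots,y_n]$ are defined by $P_0=Q_0=1$ and, for $n\ge1$, $P_n(y_1,\dots,y_n)=\sum_{m_1+2m_2+3m_3+\cdots=n}\frac{(-1)^{m_2+m_4+\cdots}}{m_1!m_2!\cdots}\prod_{i\ge1}\left(\frac{y_i}{i}\right)^{m_i}$ and $Q_n(y_1,\dots,y_n)=\sum_{m_1+2m_2+\cdots=n}\frac{1}{m_1!m_2!\cdots}\prod_{i\ge1}\left(\frac{y_i}{i}\right)^{m_i}$, the sums over tuples of nonnegative integers $(m_1,m_2,\dots)$. (Equivalently, $P_n(p_1,\dots,p_n)=e_n$ and $Q_n(p_1,\dots,p_n)=h_n$, where $p_i,e_i,h_i$ are the power-sum, elementary and complete symmetric functions.) $\zeta$ is the Riemann zeta function. *)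

theory Defs
  imports "HOL-Analysis.Analysis"
begin

definition hnum :: "nat \<Rightarrow> nat \<Rightarrow> real" where
  "hnum r n = (\<Sum>j=1..n. 1 / (real j) ^ r)"

text \<open>Necessarily each m_i is at most n, and m_i = 0 for i > n.\<close>
definition part_tuples :: "nat \<Rightarrow> (nat \<Rightarrow> nat) set" where
  "part_tuples n = {m \<in> PiE {1..n} (\<lambda>_. {0..n}). (\<Sum>i=1..n. i * m i) = n}"

definition Ppoly :: "nat \<Rightarrow> (nat \<Rightarrow> real) \<Rightarrow> real" where
  "Ppoly n y = (\<Sum>m\<in>part_tuples n.
      (-1) ^ (\<Sum>i\<in>{i\<in>{1..n}. even i}. m i) *
      (\<Prod>i=1..n. (y i / real i) ^ m i / fact (m i)))"

definition Qpoly :: "nat \<Rightarrow> (nat \<Rightarrow> real) \<Rightarrow> real" where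
  "Qpoly n y = (\<Sum>m\<in>part_tuples n.
      (\<Prod>i=1..n. (y i / real i) ^ m i / fact (m i)))"

text \<open>Riemann zeta at integer arguments; only used for s \<ge> 2, where it is the convergent series.\<close>
definition zeta_nat :: "nat \<Rightarrow> real" where
  "zeta_nat s = (\<Sum>n. 1 / (real (Suc n)) ^ s)"

end

theory Submission
  imports Defs "HOL-Real_Asymp.Real_Asymp"
begin

text \<open>
  By Newton's identities, P_k(H_n, H_n^(2), ...) and Q_l(H_n, H_n^(2), ...) are the elementary
  and complete symmetric functions e_k and h_l of 1, 1/2, ..., 1/n, so that
  sum_{k,l} e_k h_l t^k u^l = A_n(t, u) = prod_{j=1..n} (j + t)/(j - u).
  The series sum_n A_n(t, u)/((n+1)(n+2)) is summed in closed form by a double series that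
  telescopes first in n and then in m, giving
  (1 + u + u (t + u) sum_m 1/((m+1-u)(m+1-u-t))) / (1 - t).
  Setting t = v x, u = v and expanding the closed form in powers of v and then of x produces
  the zeta values; the theorem follows by comparing coefficients.
\<close>

section \<open>Double series and uniqueness of coefficients\<close>

lemma sums_swap_nonneg:
  fixes f :: "nat \<Rightarrow> nat \<Rightarrow> real"
  assumes nonneg: "\<And>n s. f n s \<ge> 0" and row: "\<And>n. (\<lambda>s. f n s) sums g n" and "summable g"
  shows "summable (\<lambda>n. f n s)" and "(\<lambda>s. \<Sum>n. f n s) sums (\<Sum>n. g n)"
proof -
  have row_has_sum: "((\<lambda>s. f n s) has_sum g n) UNIV" for n
    by (rule sums_nonneg_imp_has_sum[OF row nonneg])
  have "g n \<ge> 0" for n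
    using row[of n] nonneg by (metis sums_le sums_zero)
  then have g_has_sum: "(g has_sum (\<Sum>n. g n)) UNIV"
    by (intro sums_nonneg_imp_has_sum summable_sums assms(3))
  define F where "F = (\<lambda>(n, s). f n s)"
  have F_summable: "F summable_on UNIV \<times> UNIV"
    by (rule summable_on_SigmaI[where g = g])
       (use row_has_sum g_has_sum nonneg in \<open>auto simp: F_def summable_on_def\<close>)
  have "(F has_sum (\<Sum>n. g n)) (UNIV \<times> UNIV)"
    by (rule has_sum_SigmaI[where g = g])
       (use row_has_sum g_has_sum F_summable in \<open>auto simp: F_def\<close>)
  then have swapped: "((\<lambda>(s, n). f n s) has_sum (\<Sum>n. g n)) (UNIV \<times> UNIV)"
    unfolding has_sum_swap[of F] by (simp add: F_def)
  have "(\<lambda>n. f n s') summable_on UNIV" for s'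
    using summable_on_SigmaD1[of "\<lambda>s n. f n s" UNIV "\<lambda>_. UNIV" s'] swapped
    by (auto simp: summable_on_def)
  then show summable: "summable (\<lambda>n. f n s)" for s
    using summable_on_UNIV_nonneg_real_iff[of "\<lambda>n. f n s"] nonneg by auto
  have column_has_sum: "((\<lambda>n. f n s') has_sum (\<Sum>n. f n s')) UNIV" for s'
    by (rule sums_nonneg_imp_has_sum[OF summable_sums[OF summable] nonneg])
  have "((\<lambda>s. \<Sum>n. f n s) has_sum (\<Sum>n. g n)) UNIV"
    by (rule has_sum_SigmaD[where f = "\<lambda>(s, n). f n s" and A = UNIV and B = "\<lambda>_. UNIV"])
       (use swapped column_has_sum in auto)
  then show "(\<lambda>s. \<Sum>n. f n s) sums (\<Sum>n. g n)" by (rule has_sum_imp_sums)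
qed

lemma powser_coeffs_eq_0:
  fixes c :: "nat \<Rightarrow> real"
  assumes d: "d > 0" and zero: "\<And>z. 0 < z \<Longrightarrow> z < d \<Longrightarrow> (\<lambda>s. c s * z^s) sums 0"
  shows "c s = 0"
proof (induction s rule: less_induct)
  case (less s)
  have tail: "(\<lambda>n. c (n + s) * z^n) sums 0" if z: "0 < z" "z < d" for z
  proof -
    have "(\<lambda>n. c (n + s) * z^(n + s)) sums (0 - (\<Sum>i<s. c i * z^i))"
      by (rule sums_split_initial_segment[OF zero[OF z]])
    then have "(\<lambda>n. c (n + s) * z^(n + s) * (1 / z^s)) sums (0 * (1 / z^s))"
      using less by (intro sums_mult2) simp
    moreover have "c (n + s) * z^(n + s) * (1 / z^s) = c (n + s) * z^n" for n
      using z by (simp add: power_add)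
    ultimately show ?thesis by simp
  qed
  define g where "g = (\<lambda>w. \<Sum>n. c (n + s) * w^n)"
  have "summable (\<lambda>n. c (n + s) * (d/2)^n)"
    using tail[of "d/2"] d by (simp add: sums_iff)
  then have "isCont g 0"
    unfolding g_def by (rule isCont_powser) (use d in simp)
  then have "(g \<longlongrightarrow> g 0) (at_right 0)"
    by (simp add: isCont_def filterlim_at_split)
  moreover have "eventually (\<lambda>w. g w = 0) (at_right 0)"
    unfolding eventually_at_right_field
    by (rule exI[of _ d]) (use d tail in \<open>auto simp: g_def sums_iff\<close>)
  then have "(g \<longlongrightarrow> 0) (at_right 0)"
    by (rule tendsto_eventually)
  ultimately have "g 0 = 0"
    using tendsto_unique[OF trivial_limit_at_right_real] by blast
  then show ?case
    using powser_zero[of "\<lambda>n. c (n + s)"] by (simp add: g_def)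
qed

lemma powser_coeffs_unique:
  fixes a b :: "nat \<Rightarrow> real"
  assumes "d > 0"
    and "\<And>z. 0 < z \<Longrightarrow> z < d \<Longrightarrow> (\<lambda>s. a s * z^s) sums F z"
    and "\<And>z. 0 < z \<Longrightarrow> z < d \<Longrightarrow> (\<lambda>s. b s * z^s) sums F z"
  shows "a s = b s"
proof -
  have "a s - b s = 0"
  proof (rule powser_coeffs_eq_0[of d "\<lambda>s. a s - b s"])
    fix z :: real
    assume "0 < z" "z < d"
    from sums_diff[OF assms(2)[OF this] assms(3)[OF this]]
    show "(\<lambda>s. (a s - b s) * z^s) sums 0" by (simp add: algebra_simps)
  qed (use assms(1) in simp)
  then show ?thesis by simp
qed

lemma polyfun_coeffs_unique:
  fixes p q :: "nat \<Rightarrow> real"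
  assumes "\<And>x. 0 < x \<Longrightarrow> x < 1 \<Longrightarrow> (\<Sum>k\<le>s. p k * x^k) = (\<Sum>k\<le>s. q k * x^k)" and "k \<le> s"
  shows "p k = q k"
proof -
  have "{0<..<1} \<subseteq> {x. (\<Sum>k\<le>s. (p k - q k) * x^k) = 0}"
    using assms(1) by (auto simp: left_diff_distrib sum_subtractf)
  then have "infinite {x::real. (\<Sum>k\<le>s. (p k - q k) * x^k) = 0}"
    by (meson finite_subset infinite_Ioo zero_less_one)
  then show ?thesis
    using polyfun_finite_roots[where c = "\<lambda>k. p k - q k" and n = s] assms(2) by auto
qed


section \<open>Symmetric functions of 1, 1/2, ..., 1/n\<close>

text \<open>\<open>esym_recip k n\<close> and \<open>hsym_recip k n\<close> are e_k and h_k of 1, 1/2, ..., 1/n, computed by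
  adjoining the variable 1/(n+1).\<close>

fun esym_recip :: "nat \<Rightarrow> nat \<Rightarrow> real" where
  "esym_recip 0 n = 1"
| "esym_recip (Suc k) 0 = 0"
| "esym_recip (Suc k) (Suc n) = esym_recip (Suc k) n + esym_recip k n / real (Suc n)"

fun hsym_recip :: "nat \<Rightarrow> nat \<Rightarrow> real" where
  "hsym_recip 0 n = 1"
| "hsym_recip (Suc k) 0 = 0"
| "hsym_recip (Suc k) (Suc n) = hsym_recip (Suc k) n + hsym_recip k (Suc n) / real (Suc n)"

lemma esym_recip_0_right: "esym_recip k 0 = (if k = 0 then 1 else 0)"
  by (cases k) auto

lemma hsym_recip_0_right: "hsym_recip k 0 = (if k = 0 then 1 else 0)"
  by (cases k) auto

lemma esym_recip_nonneg: "esym_recip k n \<ge> 0"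
  by (induction k n rule: esym_recip.induct) auto

lemma hsym_recip_nonneg: "hsym_recip k n \<ge> 0"
  by (induction k n rule: hsym_recip.induct) auto

lemma hnum_Suc: "hnum i (Suc n) = hnum i n + (1 / real (Suc n)) ^ i"
  unfolding hnum_def by (simp add: power_one_over)

lemma minus_one_power_pred: "1 \<le> i \<Longrightarrow> (-1::real) ^ i = - ((-1) ^ (i - 1))"
  by (cases i) auto

lemma sum_diff_Suc_split:
  fixes f :: "nat \<Rightarrow> nat \<Rightarrow> real"
  assumes "f 0 (Suc n) = f 0 n" and "\<And>j. f (Suc j) (Suc n) = f (Suc j) n + g j"
  shows "(\<Sum>i=1..Suc m. c i * f (Suc m - i) (Suc n))
         = (\<Sum>i=1..Suc m. c i * f (Suc m - i) n) + (\<Sum>i=1..m. c i * g (m - i))"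
proof -
  have "(\<Sum>i=1..Suc m. c i * f (Suc m - i) (Suc n))
      = (\<Sum>i=1..Suc m. c i * f (Suc m - i) n + (if i \<le> m then c i * g (m - i) else 0))"
    by (rule sum.cong) (auto simp: assms Suc_diff_le algebra_simps)
  also have "\<dots> = (\<Sum>i=1..Suc m. c i * f (Suc m - i) n) + (\<Sum>i=1..m. c i * g (m - i))"
    by (simp add: sum.distrib sum.If_cases Int_def)
  finally show ?thesis .
qed

lemma alternating_power_sum_telescope:
  fixes x :: real
  assumes "\<And>j. g (Suc j) = f (Suc j) + x * f j" and "g 0 = 1" and "f 0 = 1"
  shows "(\<Sum>i=1..Suc k. (-1)^(i-1) * x^i * g (Suc k - i)) = x * f k"
proof (induction k)
  case 0
  then show ?case using assms by simp
next
  case (Suc k)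
  have "(\<Sum>i=1..Suc (Suc k). (-1)^(i-1) * x^i * g (Suc (Suc k) - i))
      = x * g (Suc k) + (\<Sum>i=Suc 1..Suc (Suc k). (-1)^(i-1) * x^i * g (Suc (Suc k) - i))"
    by (subst sum.atLeast_Suc_atMost) auto
  also have "(\<Sum>i=Suc 1..Suc (Suc k). (-1)^(i-1) * x^i * g (Suc (Suc k) - i))
      = (\<Sum>i=1..Suc k. (-1)^(Suc i-1) * x^(Suc i) * g (Suc (Suc k) - Suc i))"
    by (rule sum.shift_bounds_cl_Suc_ivl)
  also have "\<dots> = - x * (\<Sum>i=1..Suc k. (-1)^(i-1) * x^i * g (Suc k - i))"
    unfolding sum_distrib_left by (rule sum.cong) (auto simp: minus_one_power_pred)
  also have "\<dots> = - x * (x * f k)"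
    using Suc by simp
  finally show ?case using assms(1)[of k] by (simp add: algebra_simps power2_eq_square)
qed

lemma esym_recip_newton:
  "real k * esym_recip k n = (\<Sum>i=1..k. (-1)^(i-1) * hnum i n * esym_recip (k-i) n)"
proof (induction n arbitrary: k)
  case 0
  then show ?case by (simp add: hnum_def esym_recip_0_right)
next
  case (Suc n)
  show ?case
  proof (cases k)
    case 0
    then show ?thesis by simp
  next
    case (Suc m)
    define x where "x = 1 / real (Suc n)"
    have new_power: "(\<Sum>i=1..Suc m. (-1)^(i-1) * x^i * esym_recip (Suc m - i) (Suc n))
        = x * esym_recip m n"
      by (rule alternating_power_sum_telescope) (auto simp: x_def)
    have "(\<Sum>i=1..Suc m. (-1)^(i-1) * hnum i n * esym_recip (Suc m - i) (Suc n))
        = (\<Sum>i=1..Suc m. (-1)^(i-1) * hnum i n * esym_recip (Suc m - i) n)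
          + (\<Sum>i=1..m. (-1)^(i-1) * hnum i n * (x * esym_recip (m - i) n))"
      by (rule sum_diff_Suc_split) (simp_all add: x_def)
    also have "\<dots> = real (Suc m) * esym_recip (Suc m) n + x * (real m * esym_recip m n)"
      unfolding Suc.IH by (simp add: sum_distrib_left algebra_simps del: sum.cl_ivl_Suc)
    finally have old_power: "(\<Sum>i=1..Suc m. (-1)^(i-1) * hnum i n * esym_recip (Suc m - i) (Suc n))
        = real (Suc m) * esym_recip (Suc m) n + x * (real m * esym_recip m n)" .
    have "(\<Sum>i=1..Suc m. (-1)^(i-1) * hnum i (Suc n) * esym_recip (Suc m - i) (Suc n))
        = (\<Sum>i=1..Suc m. (-1)^(i-1) * hnum i n * esym_recip (Suc m - i) (Suc n))
          + (\<Sum>i=1..Suc m. (-1)^(i-1) * x^i * esym_recip (Suc m - i) (Suc n))"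
      unfolding sum.distrib[symmetric] hnum_Suc x_def
      by (rule sum.cong) (auto simp: algebra_simps)
    also have "\<dots> = real (Suc m) * esym_recip (Suc m) (Suc n)"
      unfolding new_power old_power by (simp add: x_def algebra_simps add_divide_distrib)
    finally show ?thesis using Suc by simp
  qed
qed

lemma hsym_recip_newton: "real k * hsym_recip k n = (\<Sum>i=1..k. hnum i n * hsym_recip (k-i) n)"
proof (induction n arbitrary: k)
  case 0
  then show ?case by (simp add: hnum_def hsym_recip_0_right)
next
  case (Suc n)
  define x where "x = 1 / real (Suc n)"
  show ?case
  proof (induction k)
    case 0
    then show ?case by simp
  next
    case (Suc m)
    have IH: "real m * hsym_recip m (Suc n)
        = (\<Sum>i=1..m. hnum i n * hsym_recip (m-i) (Suc n)) + (\<Sum>i=1..m. x^i * hsym_recip (m-i) (Suc n))"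
      using Suc.IH unfolding hnum_Suc x_def sum.distrib[symmetric] by (simp add: algebra_simps)
    have "(\<Sum>i=1..Suc m. hnum i n * hsym_recip (Suc m - i) (Suc n))
        = (\<Sum>i=1..Suc m. hnum i n * hsym_recip (Suc m - i) n)
          + (\<Sum>i=1..m. hnum i n * (x * hsym_recip (m - i) (Suc n)))"
      by (rule sum_diff_Suc_split) (simp_all add: x_def)
    also have "\<dots> = real (Suc m) * hsym_recip (Suc m) n
        + x * (\<Sum>i=1..m. hnum i n * hsym_recip (m - i) (Suc n))"
      unfolding \<open>\<And>k. real k * hsym_recip k n = _\<close>
      by (simp add: sum_distrib_left algebra_simps del: sum.cl_ivl_Suc)
    finally have old_power: "(\<Sum>i=1..Suc m. hnum i n * hsym_recip (Suc m - i) (Suc n))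
        = real (Suc m) * hsym_recip (Suc m) n
          + x * (\<Sum>i=1..m. hnum i n * hsym_recip (m - i) (Suc n))" .
    have "(\<Sum>i=1..Suc m. x^i * hsym_recip (Suc m - i) (Suc n))
        = x * hsym_recip m (Suc n) + (\<Sum>i=Suc 1..Suc m. x^i * hsym_recip (Suc m - i) (Suc n))"
      by (subst sum.atLeast_Suc_atMost) auto
    also have "(\<Sum>i=Suc 1..Suc m. x^i * hsym_recip (Suc m - i) (Suc n))
        = (\<Sum>i=1..m. x^(Suc i) * hsym_recip (Suc m - Suc i) (Suc n))"
      by (rule sum.shift_bounds_cl_Suc_ivl)
    finally have new_power: "(\<Sum>i=1..Suc m. x^i * hsym_recip (Suc m - i) (Suc n))
        = x * hsym_recip m (Suc n) + x * (\<Sum>i=1..m. x^i * hsym_recip (m - i) (Suc n))"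
      by (simp add: sum_distrib_left mult.assoc)
    have "(\<Sum>i=1..Suc m. hnum i (Suc n) * hsym_recip (Suc m - i) (Suc n))
        = (\<Sum>i=1..Suc m. hnum i n * hsym_recip (Suc m - i) (Suc n))
          + (\<Sum>i=1..Suc m. x^i * hsym_recip (Suc m - i) (Suc n))"
      unfolding sum.distrib[symmetric] hnum_Suc x_def
      by (rule sum.cong) (auto simp: algebra_simps)
    also have "\<dots> = real (Suc m) * hsym_recip (Suc m) n + x * (real m * hsym_recip m (Suc n))
                    + x * hsym_recip m (Suc n)"
      unfolding old_power new_power IH by (simp add: algebra_simps)
    also have "\<dots> = real (Suc m) * hsym_recip (Suc m) (Suc n)"
      by (simp add: x_def algebra_simps add_divide_distrib)
    finally show ?case by simp
  qed
qed

section \<open>Newton's identities for the partition polynomials\<close>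

definition part_weight :: "(nat \<Rightarrow> real) \<Rightarrow> nat set \<Rightarrow> (nat \<Rightarrow> nat) \<Rightarrow> real" where
  "part_weight y I m = (\<Prod>j\<in>I. (y j / real j) ^ m j / fact (m j))"

lemma Qpoly_part_weight: "Qpoly k y = (\<Sum>m\<in>part_tuples k. part_weight y {1..k} m)"
  unfolding Qpoly_def part_weight_def ..

lemma part_weight_cong: "(\<And>j. j \<in> I \<Longrightarrow> m j = m' j) \<Longrightarrow> part_weight y I m = part_weight y I m'"
  unfolding part_weight_def by (rule prod.cong) auto

lemma part_weight_mono_neutral:
  assumes "finite J" "I \<subseteq> J" "\<And>j. j \<in> J - I \<Longrightarrow> m j = 0"
  shows "part_weight y J m = part_weight y I m"
  unfolding part_weight_def by (rule prod.mono_neutral_cong_right) (use assms in auto)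

lemma finite_part_tuples: "finite (part_tuples k)"
  unfolding part_tuples_def
  by (rule finite_subset[of _ "PiE {1..k} (\<lambda>_. {0..k})"]) (auto intro: finite_PiE)

lemma mem_part_tuples: "m \<in> part_tuples k \<longleftrightarrow>
   (\<forall>j\<in>{1..k}. m j \<le> k) \<and> (\<forall>j. j \<notin> {1..k} \<longrightarrow> m j = undefined) \<and> (\<Sum>j=1..k. j * m j) = k"
  unfolding part_tuples_def PiE_iff extensional_def by auto

lemma part_tuples_weighted_sum: "m \<in> part_tuples k \<Longrightarrow> (\<Sum>j=1..k. j * m j) = k"
  unfolding part_tuples_def by auto

lemma part_tuples_sum_subset_le:
  assumes m: "m \<in> part_tuples k" and "I \<subseteq> {1..k}"
  shows "(\<Sum>j\<in>I. j * m j) \<le> k"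
proof -
  have "(\<Sum>j\<in>I. j * m j) \<le> (\<Sum>j=1..k. j * m j)"
    by (rule sum_mono2) (use assms in auto)
  then show ?thesis using part_tuples_weighted_sum[OF m] by simp
qed

text \<open>Adding a part of size i to a partition of k - i, and removing it again: a bijection onto
  the partitions of k that have a part of size i.\<close>

definition part_insert :: "nat \<Rightarrow> nat \<Rightarrow> (nat \<Rightarrow> nat) \<Rightarrow> nat \<Rightarrow> nat" where
  "part_insert k i m' = (\<lambda>j. if j \<in> {1..k}
     then (if j \<le> k - i then m' j else 0) + (if j = i then 1 else 0) else undefined)"

definition part_remove :: "nat \<Rightarrow> nat \<Rightarrow> (nat \<Rightarrow> nat) \<Rightarrow> nat \<Rightarrow> nat" where
  "part_remove k i m = (\<lambda>j. if j \<in> {1..k-i} then m j - (if j = i then 1 else 0) else undefined)"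

lemma part_insert_weighted_sum:
  assumes "1 \<le> i" "i \<le> k"
  shows "(\<Sum>j=1..k. j * part_insert k i m' j) = (\<Sum>j=1..k-i. j * m' j) + i"
proof -
  have "(\<Sum>j=1..k. j * part_insert k i m' j)
      = (\<Sum>j=1..k. j * (if j \<le> k - i then m' j else 0)) + (\<Sum>j=1..k. if i = j then j else 0)"
    unfolding sum.distrib[symmetric] part_insert_def by (rule sum.cong) auto
  also have "(\<Sum>j=1..k. j * (if j \<le> k - i then m' j else 0)) = (\<Sum>j=1..k-i. j * m' j)"
    by (rule sum.mono_neutral_cong_right) auto
  finally show ?thesis using assms by (simp add: sum.delta)
qed

lemma part_tuples_large_part:
  assumes m: "m \<in> part_tuples k" and i: "1 \<le> i" "i \<le> k" "1 \<le> m i"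
    and j: "j \<in> {1..k}" "k - i < j"
  shows "m j = (if j = i then 1 else 0)"
proof (cases "j = i")
  case True
  have "i * m i \<le> k" using part_tuples_sum_subset_le[OF m, of "{i}"] i by simp
  moreover have "i * 2 \<le> i * m i" if "m i \<ge> 2" using that by simp
  ultimately have "m i < 2" using True j by linarith
  then show ?thesis using True i by auto
next
  case False
  have "j * m j + i * m i \<le> k" using part_tuples_sum_subset_le[OF m, of "{i, j}"] False i j by simp
  moreover have "i \<le> i * m i" using i by simp
  ultimately have "j * m j < j" using j by linarith
  then show ?thesis using False by simp
qed

lemma part_remove_insert:
  assumes "m' \<in> part_tuples (k - i)" "1 \<le> i" "i \<le> k"
  shows "part_remove k i (part_insert k i m') = m'"
proof
  fix j
  show "part_remove k i (part_insert k i m') j = m' j"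
    using assms unfolding mem_part_tuples part_remove_def part_insert_def by auto
qed

lemma part_insert_remove:
  assumes m: "m \<in> part_tuples k" and i: "1 \<le> i" "i \<le> k" "1 \<le> m i"
  shows "part_insert k i (part_remove k i m) = m"
proof
  fix j
  show "part_insert k i (part_remove k i m) j = m j"
    using part_tuples_large_part[OF m i, of j] m i
    unfolding part_insert_def part_remove_def mem_part_tuples by auto
qed

lemma part_insert_mem:
  assumes m': "m' \<in> part_tuples (k - i)" and i: "1 \<le> i" "i \<le> k"
  shows "part_insert k i m' \<in> part_tuples k"
proof -
  have "part_insert k i m' j \<le> k" if "j \<in> {1..k}" for j
    using m' i that unfolding mem_part_tuples part_insert_def by force
  moreover have "(\<Sum>j=1..k. j * part_insert k i m' j) = k"
    using part_insert_weighted_sum[OF i, of m'] m' i unfolding mem_part_tuples by auto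
  ultimately show ?thesis
    unfolding mem_part_tuples by (auto simp: part_insert_def)
qed

lemma part_remove_mem:
  assumes m: "m \<in> part_tuples k" and i: "1 \<le> i" "i \<le> k" "1 \<le> m i"
  shows "part_remove k i m \<in> part_tuples (k - i)"
proof -
  have "(\<Sum>j=1..k-i. j * part_remove k i m j) = k - i"
    using part_insert_weighted_sum[OF i(1,2), of "part_remove k i m"]
    unfolding part_insert_remove[OF assms] part_tuples_weighted_sum[OF m] by simp
  moreover have "part_remove k i m j \<le> k - i" if j: "j \<in> {1..k-i}" for j
  proof -
    have "j * part_remove k i m j \<le> k - i"
      using member_le_sum[of j "{1..k-i}" "\<lambda>j. j * part_remove k i m j"] j calculation by simp
    moreover have "part_remove k i m j \<le> j * part_remove k i m j" using j by simp
    ultimately show ?thesis by linarith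
  qed
  ultimately show ?thesis
    unfolding mem_part_tuples by (auto simp: part_remove_def)
qed

lemma part_weight_insert:
  assumes m': "m' \<in> part_tuples (k - i)" and i: "1 \<le> i" "i \<le> k"
  shows "real (i * part_insert k i m' i) * part_weight y {1..k} (part_insert k i m')
         = y i * part_weight y {1..k-i} m'"
proof -
  define m0 where "m0 = (\<lambda>j. if j \<le> k - i then m' j else 0)"
  define f where "f = (\<lambda>j a. (y j / real j) ^ a / fact a)"
  have ik: "i \<in> {1..k}" using i by auto
  have ins_i: "part_insert k i m' i = m0 i + 1" using ik by (simp add: part_insert_def m0_def)
  have "part_weight y {1..k-i} m' = part_weight y {1..k-i} m0"
    by (rule part_weight_cong) (auto simp: m0_def)
  also have "\<dots> = part_weight y {1..k} m0"
    by (rule part_weight_mono_neutral[symmetric]) (auto simp: m0_def)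
  also have "\<dots> = f i (m0 i) * (\<Prod>j\<in>{1..k}-{i}. f j (m0 j))"
    unfolding part_weight_def f_def by (rule prod.remove[OF _ ik]) simp
  finally have old: "part_weight y {1..k-i} m' = f i (m0 i) * (\<Prod>j\<in>{1..k}-{i}. f j (m0 j))" .
  have "part_weight y {1..k} (part_insert k i m')
      = f i (part_insert k i m' i) * (\<Prod>j\<in>{1..k}-{i}. f j (part_insert k i m' j))"
    unfolding part_weight_def f_def by (rule prod.remove[OF _ ik]) simp
  also have "(\<Prod>j\<in>{1..k}-{i}. f j (part_insert k i m' j)) = (\<Prod>j\<in>{1..k}-{i}. f j (m0 j))"
    by (rule prod.cong) (auto simp: part_insert_def m0_def)
  finally have new: "part_weight y {1..k} (part_insert k i m')
      = f i (m0 i + 1) * (\<Prod>j\<in>{1..k}-{i}. f j (m0 j))"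
    unfolding ins_i .
  have "real (i * (a + 1)) * f i (a + 1) = y i * f i a" for a
    using i
    by (simp del: of_nat_Suc add: f_def fact_Suc power_Suc field_simps) (simp add: algebra_simps)
  then show ?thesis unfolding ins_i old new by (simp add: mult.assoc)
qed

lemma Qpoly_part_sum:
  assumes i: "1 \<le> i" "i \<le> k"
  shows "(\<Sum>m\<in>part_tuples k. real (i * m i) * part_weight y {1..k} m) = y i * Qpoly (k - i) y"
proof -
  have "(\<Sum>m\<in>part_tuples k. real (i * m i) * part_weight y {1..k} m)
      = (\<Sum>m\<in>{m\<in>part_tuples k. 1 \<le> m i}. real (i * m i) * part_weight y {1..k} m)"
    by (rule sum.mono_neutral_right) (auto simp: finite_part_tuples)
  also have "\<dots> = (\<Sum>m'\<in>part_tuples (k - i). y i * part_weight y {1..k-i} m')"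
  proof (rule sum.reindex_bij_witness[of _ "part_remove k i" "part_insert k i", symmetric])
    fix m' assume m': "m' \<in> part_tuples (k - i)"
    show "part_remove k i (part_insert k i m') = m'" by (rule part_remove_insert[OF m' i])
    show "part_insert k i m' \<in> {m \<in> part_tuples k. 1 \<le> m i}"
      using part_insert_mem[OF m' i] i by (simp add: part_insert_def)
    show "real (i * part_insert k i m' i) * part_weight y {1..k} (part_insert k i m')
        = y i * part_weight y {1..k - i} m'"
      by (rule part_weight_insert[OF m' i])
  next
    fix m assume "m \<in> {m \<in> part_tuples k. 1 \<le> m i}"
    then show "part_insert k i (part_remove k i m) = m" "part_remove k i m \<in> part_tuples (k - i)"
      using part_insert_remove part_remove_mem i by auto
  qed
  also have "\<dots> = y i * Qpoly (k - i) y"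
    by (simp add: Qpoly_part_weight sum_distrib_left)
  finally show ?thesis .
qed

text \<open>Newton's identity k h_k = sum_i p_i h_(k-i): weight each partition of k by
  k = sum_i i m_i and remove one part of size i.\<close>

lemma Qpoly_newton: "real k * Qpoly k y = (\<Sum>i=1..k. y i * Qpoly (k-i) y)"
proof -
  have "real k * Qpoly k y = (\<Sum>m\<in>part_tuples k. real k * part_weight y {1..k} m)"
    by (simp add: Qpoly_part_weight sum_distrib_left)
  also have "\<dots> = (\<Sum>m\<in>part_tuples k. \<Sum>i=1..k. real (i * m i) * part_weight y {1..k} m)"
  proof (rule sum.cong[OF refl])
    fix m assume "m \<in> part_tuples k"
    then have "real k = (\<Sum>i=1..k. real (i * m i))"
      using part_tuples_weighted_sum by (metis of_nat_sum)
    then show "real k * part_weight y {1..k} m = (\<Sum>i=1..k. real (i * m i) * part_weight y {1..k} m)"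
      by (simp add: sum_distrib_right)
  qed
  also have "\<dots> = (\<Sum>i=1..k. \<Sum>m\<in>part_tuples k. real (i * m i) * part_weight y {1..k} m)"
    by (rule sum.swap)
  also have "\<dots> = (\<Sum>i=1..k. y i * Qpoly (k-i) y)"
    by (intro sum.cong refl Qpoly_part_sum) auto
  finally show ?thesis .
qed

lemma part_tuples_0: "part_tuples 0 = {\<lambda>_. undefined}"
  unfolding part_tuples_def by auto

lemma Qpoly_0 [simp]: "Qpoly 0 y = 1"
  unfolding Qpoly_def part_tuples_0 by simp

lemma Ppoly_0 [simp]: "Ppoly 0 y = 1"
  unfolding Ppoly_def part_tuples_0 by simp

lemma Ppoly_eq_Qpoly_signed: "Ppoly k y = Qpoly k (\<lambda>j. (if even j then -1 else 1) * y j)"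
  unfolding Ppoly_def Qpoly_def
proof (rule sum.cong[OF refl])
  fix m assume m: "m \<in> part_tuples k"
  have "(-1::real) ^ (\<Sum>i\<in>{i\<in>{1..k}. even i}. m i) = (\<Prod>i\<in>{i\<in>{1..k}. even i}. (-1) ^ m i)"
    by (simp add: power_sum)
  also have "\<dots> = (\<Prod>i=1..k. (if even i then -1 else 1) ^ m i)"
    by (rule prod.mono_neutral_cong_left) auto
  finally have sign: "(-1::real) ^ (\<Sum>i\<in>{i\<in>{1..k}. even i}. m i)
      = (\<Prod>i=1..k. (if even i then -1 else 1) ^ m i)" .
  show "(-1) ^ (\<Sum>i\<in>{i\<in>{1..k}. even i}. m i) * (\<Prod>i=1..k. (y i / real i) ^ m i / fact (m i))
      = (\<Prod>i=1..k. ((if even i then -1 else 1) * y i / real i) ^ m i / fact (m i))"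
    unfolding sign prod.distrib[symmetric]
    by (intro prod.cong refl) (simp add: power_mult_distrib power_divide)
qed

lemma Ppoly_newton: "real k * Ppoly k y = (\<Sum>i=1..k. (-1)^(i-1) * y i * Ppoly (k-i) y)"
  unfolding Ppoly_eq_Qpoly_signed Qpoly_newton
  by (rule sum.cong) (auto simp: minus_one_power_pred)

lemma newton_recurrence_unique:
  fixes f g :: "nat \<Rightarrow> real"
  assumes "f 0 = g 0"
    and "\<And>k. real k * f k = (\<Sum>i=1..k. c i * f (k-i))"
    and "\<And>k. real k * g k = (\<Sum>i=1..k. c i * g (k-i))"
  shows "f k = g k"
proof (induction k rule: less_induct)
  case (less k)
  show ?case
  proof (cases "k = 0")
    case False
    have "(\<Sum>i=1..k. c i * f (k-i)) = (\<Sum>i=1..k. c i * g (k-i))"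
      by (rule sum.cong) (use less False in auto)
    then have "real k * f k = real k * g k"
      by (simp only: assms(2,3))
    then show ?thesis using False by simp
  qed (use assms(1) in simp)
qed

lemma Ppoly_hnum: "Ppoly k (\<lambda>i. hnum i n) = esym_recip k n"
  by (rule newton_recurrence_unique[where c = "\<lambda>i. (-1)^(i-1) * hnum i n"])
     (simp_all add: Ppoly_newton esym_recip_newton mult.assoc)

lemma Qpoly_hnum: "Qpoly k (\<lambda>i. hnum i n) = hsym_recip k n"
  by (rule newton_recurrence_unique[where c = "\<lambda>i. hnum i n"])
     (simp_all add: Qpoly_newton hsym_recip_newton)

section \<open>The generating function A_n(t, u)\<close>

lemma esym_recip_sums: "(\<lambda>k. esym_recip k n * z^k) sums (\<Prod>j=1..n. 1 + z / real j)"
proof (induction n)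
  case 0
  have "(\<lambda>k. esym_recip k 0 * z^k) sums (\<Sum>k\<in>{0}. esym_recip k 0 * z^k)"
    by (rule sums_finite) (auto simp: esym_recip_0_right)
  then show ?case by simp
next
  case (Suc n)
  define P where "P = (\<Prod>j=1..n. 1 + z / real j)"
  define shift where
    "shift = (\<lambda>k. if k = 0 then 0 else esym_recip (k - 1) n * z^(k - 1) * (z / real (Suc n)))"
  have "(\<lambda>k. shift (Suc k)) sums (P * (z / real (Suc n)))"
    unfolding shift_def using sums_mult2[OF Suc.IH[folded P_def], of "z / real (Suc n)"] by simp
  then have shifted: "shift sums (P * (z / real (Suc n)))"
    by (subst (asm) sums_Suc_iff) (simp add: shift_def)
  have "(\<lambda>k. esym_recip k n * z^k + shift k) sums (P + P * (z / real (Suc n)))"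
    by (rule sums_add[OF Suc.IH[folded P_def] shifted])
  moreover have "esym_recip k n * z^k + shift k = esym_recip k (Suc n) * z^k" for k
    by (cases k) (simp_all add: shift_def field_simps)
  moreover have "P + P * (z / real (Suc n)) = (\<Prod>j=1..Suc n. 1 + z / real j)"
    unfolding P_def by (simp add: algebra_simps)
  ultimately show ?case by simp
qed

lemma hsym_recip_Suc_right: "hsym_recip l (Suc n) = (\<Sum>i\<le>l. (1 / real (Suc n))^i * hsym_recip (l - i) n)"
proof (induction l)
  case (Suc l)
  have "hsym_recip (Suc l) (Suc n) = hsym_recip (Suc l) n + (1 / real (Suc n)) * hsym_recip l (Suc n)"
    by simp
  also have "\<dots> = hsym_recip (Suc l) n
      + (\<Sum>i\<le>l. (1 / real (Suc n))^(Suc i) * hsym_recip (Suc l - Suc i) n)"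
    unfolding Suc sum_distrib_left by (simp add: mult.assoc)
  also have "\<dots> = (\<Sum>i\<le>Suc l. (1 / real (Suc n))^i * hsym_recip (Suc l - i) n)"
    by (subst sum.atMost_Suc_shift) simp
  finally show ?case .
qed simp

lemma hsym_recip_sums:
  assumes z: "0 \<le> z" "z < 1"
  shows "(\<lambda>l. hsym_recip l n * z^l) sums (\<Prod>j=1..n. 1 / (1 - z / real j))"
proof (induction n)
  case 0
  have "(\<lambda>l. hsym_recip l 0 * z^l) sums (\<Sum>l\<in>{0}. hsym_recip l 0 * z^l)"
    by (rule sums_finite) (auto simp: hsym_recip_0_right)
  then show ?case by simp
next
  case (Suc n)
  define q where "q = z / real (Suc n)"
  have q: "0 \<le> q" "q < 1" unfolding q_def using z by (auto simp: divide_simps)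
  have "(\<lambda>l. \<Sum>i\<le>l. q^i * (hsym_recip (l - i) n * z^(l - i)))
      sums ((\<Sum>i. q^i) * (\<Sum>l. hsym_recip l n * z^l))"
    by (rule Cauchy_product_sums)
       (use q Suc.IH z hsym_recip_nonneg in \<open>simp_all add: summable_geometric sums_iff\<close>)
  moreover have "(\<Sum>i\<le>l. q^i * (hsym_recip (l - i) n * z^(l - i))) = hsym_recip l (Suc n) * z^l" for l
    unfolding hsym_recip_Suc_right sum_distrib_right q_def
    by (intro sum.cong refl) (simp add: power_divide field_simps flip: power_add)
  moreover have "(\<Sum>i. q^i) = 1 / (1 - z / real (Suc n))"
    using suminf_geometric[of q] q z unfolding q_def by simp
  ultimately show ?case
    using Suc.IH by (simp add: sums_iff mult.commute)
qed

definition poch_ratio :: "real \<Rightarrow> real \<Rightarrow> nat \<Rightarrow> real" where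
  "poch_ratio t u n = (\<Prod>j=1..n. (real j + t) / (real j - u))"

definition mixed_sym :: "nat \<Rightarrow> nat \<Rightarrow> real \<Rightarrow> real" where
  "mixed_sym s n x = (\<Sum>k\<le>s. esym_recip k n * x^k * hsym_recip (s - k) n)"

lemma mixed_sym_nonneg: "x \<ge> 0 \<Longrightarrow> mixed_sym s n x \<ge> 0"
  unfolding mixed_sym_def
  by (intro sum_nonneg mult_nonneg_nonneg esym_recip_nonneg hsym_recip_nonneg) auto

lemma mixed_sym_sums:
  assumes x: "0 \<le> x" and u: "0 \<le> u" "u < 1"
  shows "(\<lambda>s. mixed_sym s n x * u^s) sums poch_ratio (u * x) u n"
proof -
  have e: "(\<lambda>k. esym_recip k n * (u*x)^k) sums (\<Prod>j=1..n. 1 + (u*x) / real j)"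
    by (rule esym_recip_sums)
  have h: "(\<lambda>l. hsym_recip l n * u^l) sums (\<Prod>j=1..n. 1 / (1 - u / real j))"
    by (rule hsym_recip_sums) (use u in auto)
  have "(\<lambda>s. \<Sum>k\<le>s. esym_recip k n * (u*x)^k * (hsym_recip (s - k) n * u^(s - k)))
      sums ((\<Sum>k. esym_recip k n * (u*x)^k) * (\<Sum>l. hsym_recip l n * u^l))"
    by (rule Cauchy_product_sums)
       (use e h x u esym_recip_nonneg hsym_recip_nonneg in \<open>simp_all add: sums_iff\<close>)
  moreover have "(\<Sum>k\<le>s. esym_recip k n * (u*x)^k * (hsym_recip (s - k) n * u^(s - k)))
      = mixed_sym s n x * u^s" for s
    unfolding mixed_sym_def sum_distrib_right
    by (intro sum.cong refl) (simp add: power_mult_distrib flip: power_add)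
  moreover have "(1 + (u*x) / real j) * (1 / (1 - u / real j)) = (real j + u * x) / (real j - u)"
    if "j \<in> {1..n}" for j
    using that u by (simp add: field_simps)
  then have "(\<Prod>j=1..n. 1 + (u*x) / real j) * (\<Prod>j=1..n. 1 / (1 - u / real j)) = poch_ratio (u * x) u n"
    unfolding poch_ratio_def prod.distrib[symmetric] by (rule prod.cong[OF refl])
  ultimately show ?thesis
    using e h by (simp add: sums_iff)
qed

section \<open>Closed form of the series of A_n(t, u)/((n+1)(n+2))\<close>

lemma poch_ratio_0 [simp]: "poch_ratio t u 0 = 1"
  by (simp add: poch_ratio_def)

lemma poch_ratio_Suc: "poch_ratio t u (Suc n) = poch_ratio t u n * ((real n + 1 + t) / (real n + 1 - u))"
  unfolding poch_ratio_def by (simp add: add_ac)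

lemma poch_ratio_pos: "t > -1 \<Longrightarrow> u < 1 \<Longrightarrow> poch_ratio t u n > 0"
  unfolding poch_ratio_def by (intro prod_pos) (auto simp: field_simps)

lemma poch_ratio_mono:
  assumes "t \<ge> -1" "v \<le> w" "w < 1"
  shows "poch_ratio t v n \<le> poch_ratio t w n"
  unfolding poch_ratio_def using assms
  by (intro prod_mono) (auto intro!: divide_nonneg_pos divide_left_mono mult_pos_pos)

lemma poch_ratio_shift:
  assumes "v < 1"
  shows "poch_ratio t (v - 1) n = poch_ratio t v n * ((1 - v) / (real n + 1 - v))"
proof (induction n)
  case (Suc n)
  have "real n + 1 - (v - 1) = real n + 2 - v" "real (Suc n) + 1 - v = real n + 2 - v"
    by simp_all
  then have "poch_ratio t (v - 1) (Suc n)
      = poch_ratio t v n * ((1 - v) / (real n + 1 - v)) * ((real n + 1 + t) / (real (Suc n) + 1 - v))"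
    unfolding poch_ratio_Suc Suc by simp
  also have "\<dots> = poch_ratio t v (Suc n) * ((1 - v) / (real (Suc n) + 1 - v))"
    unfolding poch_ratio_Suc by (simp only: divide_inverse mult_ac)
  finally show ?case .
qed (use assms in simp)

lemma of_nat_neq_between:
  assumes "real k < x" "x < real k + 1"
  shows "real m \<noteq> x"
proof
  assume "real m = x"
  then have "k < m" "m < k + 1" using assms by linarith+
  then show False by simp
qed

text \<open>The double series sum_{n,m} tele_term t u n m, with poch_ratio t (u - m) n = A_n(t, u - m).
  Its column differences telescope in n (\<open>tele_term_diff\<close>) and its column sums tend to 0, so
  column 0, which is sum_n A_n(t, u)/((n+1)(n+2)), equals sum_m tele_coeff t u m.\<close>

definition tele_weight :: "real \<Rightarrow> nat \<Rightarrow> nat \<Rightarrow> real" where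
  "tele_weight u n m = (-u / (real m - u)) / (real n + 1)
     + (-u * (1 + u) / ((real m - 1 - u) * (real m - u))) / (real n + 2)"

definition tele_term :: "real \<Rightarrow> real \<Rightarrow> nat \<Rightarrow> nat \<Rightarrow> real" where
  "tele_term t u n m = poch_ratio t (u - real m) n * tele_weight u n m"

definition tele_coeff :: "real \<Rightarrow> real \<Rightarrow> nat \<Rightarrow> real" where
  "tele_coeff t u m = -u * real m / ((real m - 1 - u) * (real m - u) * (real m - u - t))"

definition tele_bound :: "real \<Rightarrow> nat \<Rightarrow> real" where
  "tele_bound u m = \<bar>-u / (real m - u)\<bar> + \<bar>-u * (1 + u) / ((real m - 1 - u) * (real m - u))\<bar>"

definition tele_column_sum :: "real \<Rightarrow> real \<Rightarrow> nat \<Rightarrow> real" where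
  "tele_column_sum t u m = (\<Sum>n. tele_term t u n m)"

definition recip_pair_sum :: "real \<Rightarrow> real \<Rightarrow> real" where
  "recip_pair_sum t u = (\<Sum>m. 1 / ((real m + 1 - u) * (real m + 1 - u - t)))"

text \<open>For t, u \<le> 1/4 we get A_n(t, u) \<le> 2 sqrt (n + 1), enough for absolute convergence.\<close>

context
  fixes t u :: real
  assumes t0: "0 \<le> t" and t1: "t \<le> 1/4" and u0: "0 < u" and u1: "u \<le> 1/4"
begin

lemma poch_ratio_square_le: "(poch_ratio t u n)^2 \<le> 4 * real n + 1"
proof (induction n)
  case (Suc n)
  define N where "N = real n"
  define r where "r = (N + 1 + t) / (N + 1 - u)"
  have N: "N \<ge> 0" by (simp add: N_def)
  have "(N + 1 + t) * (4 * N + 3) \<le> (4 * N + 5) * (N + 1 - u)"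
    using mult_right_mono[OF t1, of "4 * N + 3"] mult_right_mono[OF u1, of "4 * N + 5"] N
    by (simp add: algebra_simps)
  then have "r \<le> (4 * N + 5) / (4 * N + 3)"
    unfolding r_def using N u1 by (simp add: divide_simps)
  moreover have "0 \<le> r" unfolding r_def using N t0 u1 by simp
  ultimately have "r^2 \<le> ((4 * N + 5) / (4 * N + 3))^2"
    by (intro power_mono) auto
  then have "(poch_ratio t u (Suc n))^2 \<le> (4 * N + 1) * ((4 * N + 5) / (4 * N + 3))^2"
    unfolding poch_ratio_Suc power_mult_distrib r_def[symmetric] N_def[symmetric]
    using Suc by (intro mult_mono) (auto simp: N_def)
  also have "\<dots> \<le> 4 * (N + 1) + 1"
    using N by (simp add: power_divide divide_simps) (simp add: algebra_simps power2_eq_square)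
  finally show ?case by (simp add: N_def)
qed simp

lemma poch_ratio_le: "poch_ratio t u n \<le> 2 * (real n + 1) powr (1/2)"
proof -
  have "poch_ratio t u n \<le> sqrt (4 * (real n + 1))"
    using poch_ratio_square_le[of n] by (intro real_le_rsqrt) simp
  also have "\<dots> = 2 * sqrt (real n + 1)"
    by (subst real_sqrt_mult) simp
  finally show ?thesis by (simp add: powr_half_sqrt)
qed

lemma poch_ratio_shifted_le:
  assumes "1 \<le> m"
  shows "poch_ratio t (u - real m) n \<le> poch_ratio t u n / (real n + 1)"
proof -
  have "poch_ratio t (u - real m) n \<le> poch_ratio t (u - 1) n"
    using assms t0 u1 by (intro poch_ratio_mono) auto
  also have "\<dots> = poch_ratio t u n * ((1 - u) / (real n + 1 - u))"
    using u1 by (intro poch_ratio_shift) simp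
  also have "\<dots> \<le> poch_ratio t u n * (1 / (real n + 1))"
    using poch_ratio_pos[of t u n] t0 u0 u1
    by (intro mult_left_mono) (auto simp: divide_simps algebra_simps)
  finally show ?thesis by simp
qed

lemma summable_poch_ratio: "summable (\<lambda>n. poch_ratio t u n / (real n + 1)^2)"
proof (rule summable_comparison_test'[where N = 0])
  have "summable (\<lambda>n. real (Suc n) powr (-3/2))"
    by (subst summable_Suc_iff) (simp add: summable_real_powr_iff)
  then show "summable (\<lambda>n. 2 * real (Suc n) powr (-3/2))" by (rule summable_mult)
  fix n :: nat
  have "norm (poch_ratio t u n / (real n + 1)^2) \<le> 2 * (real n + 1) powr (1/2) / (real n + 1) powr 2"
    using poch_ratio_pos[of t u n] t0 u1 poch_ratio_le[of n]
    by (simp add: powr_numeral divide_right_mono)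
  also have "\<dots> = 2 * (real n + 1) powr (1/2 - 2)"
    unfolding powr_diff by simp
  also have "\<dots> = 2 * real (Suc n) powr (-3/2)"
    by (simp add: add.commute)
  finally show "norm (poch_ratio t u n / (real n + 1)^2) \<le> 2 * real (Suc n) powr (-3/2)" .
qed

lemma poch_ratio_div_tendsto_0: "(\<lambda>n. poch_ratio t u n / (real n + 1)) \<longlonglongrightarrow> 0"
proof (rule tendsto_sandwich[where f = "\<lambda>_. 0"
    and h = "\<lambda>n. 2 * (real n + 1) powr (1/2) / (real n + 1)"])
  show "eventually (\<lambda>n. 0 \<le> poch_ratio t u n / (real n + 1)) sequentially"
    using poch_ratio_pos[of t u] t0 u1 by (auto intro!: always_eventually less_imp_le)
  show "eventually (\<lambda>n. poch_ratio t u n / (real n + 1) \<le> 2 * (real n + 1) powr (1/2) / (real n + 1))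
      sequentially"
    by (intro always_eventually allI divide_right_mono poch_ratio_le) simp
  show "(\<lambda>n. 2 * (real n + 1) powr (1/2) / (real n + 1)) \<longlonglongrightarrow> 0"
    by real_asymp
qed simp


lemma tele_term_diff:
  "tele_term t u n m - tele_term t u n (Suc m)
   = (poch_ratio t (u - real m) n - poch_ratio t (u - real m) (Suc n)) * tele_coeff t u m"
proof -
  define A where "A = poch_ratio t (u - real m) n"
  define a where "a = real m - u"
  define P where "P = real n + 1"
  have a: "a \<noteq> 0" "a \<noteq> 1" "a \<noteq> -1" "a \<noteq> t"
    using of_nat_neq_between[of 0 u m] of_nat_neq_between[of 1 "1 + u" m]
      of_nat_neq_between[of 0 "u + t" m] t0 t1 u0 u1
    by (auto simp: a_def)
  have P: "P \<noteq> 0" "P \<noteq> -1" "P + a \<noteq> 0"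
    using u1 by (auto simp: P_def a_def)
  have shift_m: "poch_ratio t (u - real (Suc m)) n = A * ((a + 1) / (P + a))"
    using poch_ratio_shift[of "u - real m" t n] u1
    by (simp add: A_def a_def P_def algebra_simps)
  have shift_n: "poch_ratio t (u - real m) (Suc n) = A * ((P + t) / (P + a))"
    unfolding poch_ratio_Suc by (simp add: A_def a_def P_def algebra_simps)
  have w: "tele_weight u n m = -u/a/P + -u*(1+u)/((a-1)*a)/(P+1)"
    "tele_weight u n (Suc m) = -u/(a+1)/P + -u*(1+u)/(a*(a+1))/(P+1)"
    unfolding tele_weight_def a_def P_def by (simp_all add: algebra_simps)
  have weights: "tele_weight u n m * (P + a) - (a + 1) * tele_weight u n (Suc m)
      = -u * (a + u) / ((a - 1) * a)"
    unfolding w using a P by (simp add: divide_simps) (simp add: algebra_simps)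
  have coeff: "tele_coeff t u m = -u * (a + u) / ((a - 1) * a * (a - t))"
    unfolding tele_coeff_def a_def by (simp add: algebra_simps)
  have "tele_term t u n m - tele_term t u n (Suc m)
      = A / (P + a) * (tele_weight u n m * (P + a) - (a + 1) * tele_weight u n (Suc m))"
    unfolding tele_term_def shift_m A_def[symmetric] using P by (simp add: field_simps)
  also have "\<dots> = (A - A * ((P + t) / (P + a))) * tele_coeff t u m"
    unfolding weights coeff using a P by (simp add: divide_simps) (simp add: algebra_simps)
  finally show ?thesis unfolding shift_n A_def .
qed

lemma tele_weight_0: "tele_weight u n 0 = 1 / ((real n + 1) * (real n + 2))"
  using u0 by (simp add: tele_weight_def divide_simps) (simp add: algebra_simps)

lemma tele_term_bound:
  "\<bar>tele_term t u n m\<bar> \<le> (if m = 0 then 1 else tele_bound u m) * (poch_ratio t u n / (real n + 1)^2)"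
proof (cases "m = 0")
  case True
  have "tele_term t u n 0 \<le> poch_ratio t u n / (real n + 1)^2"
    unfolding tele_term_def tele_weight_0 using poch_ratio_pos[of t u n] t0 u1
    by (simp add: power2_eq_square divide_left_mono mult_left_mono)
  then show ?thesis
    using True poch_ratio_pos[of t u n] t0 u1 by (simp add: tele_term_def tele_weight_0)
next
  case False
  have "\<bar>tele_weight u n m\<bar> \<le> \<bar>-u / (real m - u)\<bar> / (real n + 1)
      + \<bar>-u * (1 + u) / ((real m - 1 - u) * (real m - u))\<bar> / (real n + 2)"
    unfolding tele_weight_def by (rule order_trans[OF abs_triangle_ineq]) (simp add: abs_divide abs_mult)
  also have "\<dots> \<le> tele_bound u m / (real n + 1)"
    unfolding tele_bound_def add_divide_distrib by (intro add_left_mono divide_left_mono) auto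
  finally have weight: "\<bar>tele_weight u n m\<bar> \<le> tele_bound u m / (real n + 1)" .
  have pos: "poch_ratio t (u - real m) n > 0"
    using t0 u1 by (intro poch_ratio_pos) auto
  have "\<bar>tele_term t u n m\<bar> = poch_ratio t (u - real m) n * \<bar>tele_weight u n m\<bar>"
    unfolding tele_term_def using pos by (simp add: abs_mult)
  also have "\<dots> \<le> (poch_ratio t u n / (real n + 1)) * (tele_bound u m / (real n + 1))"
    using poch_ratio_shifted_le[of m n] False weight pos by (intro mult_mono) auto
  finally show ?thesis using False by (simp add: power2_eq_square mult_ac)
qed

lemma summable_tele_term: "summable (\<lambda>n. tele_term t u n m)"
  by (rule summable_comparison_test'[OF summable_mult[OF summable_poch_ratio], of 0])
     (use tele_term_bound in simp)

lemma tele_column_sum_diff: "tele_column_sum t u m - tele_column_sum t u (Suc m) = tele_coeff t u m"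
proof -
  have "(\<lambda>n. poch_ratio t (u - real m) n * tele_coeff t u m) \<longlonglongrightarrow> 0"
  proof (cases "m = 0")
    case False
    have "(\<lambda>n. poch_ratio t (u - real m) n) \<longlonglongrightarrow> 0"
    proof (rule tendsto_sandwich[where f = "\<lambda>_. 0" and h = "\<lambda>n. poch_ratio t u n / (real n + 1)"])
      show "eventually (\<lambda>n. 0 \<le> poch_ratio t (u - real m) n) sequentially"
        using t0 u1 by (auto intro!: always_eventually less_imp_le poch_ratio_pos)
      show "eventually (\<lambda>n. poch_ratio t (u - real m) n \<le> poch_ratio t u n / (real n + 1)) sequentially"
        using poch_ratio_shifted_le[of m] False by (auto intro!: always_eventually)
    qed (simp_all add: poch_ratio_div_tendsto_0)
    then show ?thesis by (rule tendsto_mult_left_zero)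
  qed (simp add: tele_coeff_def)
  from telescope_sums'[OF this]
  have "(\<lambda>n. tele_term t u n m - tele_term t u n (Suc m)) sums (tele_coeff t u m)"
    by (simp add: tele_term_diff left_diff_distrib)
  moreover have "(\<lambda>n. tele_term t u n m - tele_term t u n (Suc m))
      sums (tele_column_sum t u m - tele_column_sum t u (Suc m))"
    unfolding tele_column_sum_def by (intro sums_diff summable_sums summable_tele_term)
  ultimately show ?thesis by (rule sums_unique2[symmetric])
qed

lemma tele_column_sum_tendsto_0: "tele_column_sum t u \<longlonglongrightarrow> 0"
proof -
  define C where "C = (\<Sum>n. poch_ratio t u n / (real n + 1)^2)"
  have bound: "\<bar>tele_column_sum t u m\<bar> \<le> tele_bound u m * C" if "m \<ge> 1" for m
  proof -
    have bound: "\<bar>tele_term t u n m\<bar> \<le> tele_bound u m * (poch_ratio t u n / (real n + 1)^2)" for n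
      using tele_term_bound[of n m] that by simp
    have summable_bound: "summable (\<lambda>n. tele_bound u m * (poch_ratio t u n / (real n + 1)^2))"
      by (rule summable_mult[OF summable_poch_ratio])
    have summable_abs: "summable (\<lambda>n. \<bar>tele_term t u n m\<bar>)"
      by (rule summable_comparison_test'[OF summable_bound, of 0]) (use bound in simp)
    have "\<bar>tele_column_sum t u m\<bar> \<le> (\<Sum>n. \<bar>tele_term t u n m\<bar>)"
      unfolding tele_column_sum_def by (rule summable_rabs[OF summable_abs])
    also have "\<dots> \<le> (\<Sum>n. tele_bound u m * (poch_ratio t u n / (real n + 1)^2))"
      by (rule suminf_le[OF bound summable_abs summable_bound])
    also have "\<dots> = tele_bound u m * C"
      unfolding C_def by (rule suminf_mult[OF summable_poch_ratio])
    finally show ?thesis .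
  qed
  have "(\<lambda>m. tele_bound u m * C) \<longlonglongrightarrow> 0"
  proof -
    have "(\<lambda>m. -u / (real m - u)) \<longlonglongrightarrow> 0" "(\<lambda>m. -u * (1 + u) / ((real m - 1 - u) * (real m - u))) \<longlonglongrightarrow> 0"
      by real_asymp+
    then have "tele_bound u \<longlonglongrightarrow> 0"
      unfolding tele_bound_def[abs_def] by (intro tendsto_add_zero tendsto_rabs_zero)
    then show ?thesis by (rule tendsto_mult_left_zero)
  qed
  moreover have "eventually (\<lambda>m. norm (tele_column_sum t u m) \<le> tele_bound u m * C) sequentially"
    using bound by (intro eventually_sequentiallyI[of 1]) simp
  ultimately show ?thesis
    by (rule Lim_null_comparison[rotated])
qed

lemma tele_coeff_sums: "tele_coeff t u sums (\<Sum>n. poch_ratio t u n / ((real n + 1) * (real n + 2)))"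
proof -
  have "(\<lambda>m. tele_column_sum t u m - tele_column_sum t u (Suc m)) sums (tele_column_sum t u 0 - 0)"
    by (rule telescope_sums'[OF tele_column_sum_tendsto_0])
  then have "tele_coeff t u sums tele_column_sum t u 0"
    by (simp only: tele_column_sum_diff) simp
  then show ?thesis
    by (simp add: tele_column_sum_def tele_term_def tele_weight_0)
qed

lemma poch_ratio_series_sums:
  "summable (\<lambda>m. 1 / ((real m + 1 - u) * (real m + 1 - u - t)))"
  "(\<lambda>n. poch_ratio t u n / ((real n + 1) * (real n + 2)))
     sums ((1 + u + u * (t + u) * recip_pair_sum t u) / (1 - t))"
proof -
  define X where "X = (\<lambda>m::nat. 1 / ((real m + 1 - u) * (real m + 1 - u - t)))"
  define L where "L = (\<Sum>n. poch_ratio t u n / ((real n + 1) * (real n + 2)))"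
  have coeff: "(\<lambda>m. tele_coeff t u (Suc m)) sums L"
    using tele_coeff_sums sums_Suc_iff[of "tele_coeff t u" L] by (simp add: L_def tele_coeff_def)
  have "(\<lambda>m. 1 / (real m - u)) \<longlonglongrightarrow> 0"
    by real_asymp
  from telescope_sums'[OF this]
  have recip: "(\<lambda>m. 1 / (real m - u) - 1 / (real (Suc m) - u)) sums (-1 / u)"
    by simp
  have partial_fractions: "u * (t + u) * X m
      = (1 - t) * tele_coeff t u (Suc m) + u * (1 + u) * (1 / (real m - u) - 1 / (real (Suc m) - u))"
    for m
  proof -
    define b where "b = real m - u"
    have "b \<noteq> 0" "b + 1 \<noteq> 0" "b + 1 - t \<noteq> 0"
      using of_nat_neq_between[of 0 u m] u0 u1 t1 by (auto simp: b_def)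
    then have "u * (t + u) / ((b + 1) * (b + 1 - t))
        = (1 - t) * (-u * (b + 1 + u) / (b * (b + 1) * (b + 1 - t)))
          + u * (1 + u) * (1 / b - 1 / (b + 1))"
      by (simp add: divide_simps) (simp add: algebra_simps)
    then show ?thesis
      unfolding X_def tele_coeff_def b_def by (simp add: algebra_simps)
  qed
  have "(\<lambda>m. u * (t + u) * X m) sums ((1 - t) * L + u * (1 + u) * (-1 / u))"
    unfolding partial_fractions by (intro sums_add sums_mult coeff recip)
  also have "(1 - t) * L + u * (1 + u) * (-1 / u) = (1 - t) * L - (1 + u)"
    using u0 by (simp add: field_simps)
  finally have "(\<lambda>m. u * (t + u) * X m / (u * (t + u))) sums (((1 - t) * L - (1 + u)) / (u * (t + u)))"
    by (rule sums_divide)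
  then have X: "X sums (((1 - t) * L - (1 + u)) / (u * (t + u)))"
    using u0 t0 by simp
  then show "summable (\<lambda>m. 1 / ((real m + 1 - u) * (real m + 1 - u - t)))"
    by (simp add: X_def sums_iff)
  have "summable (\<lambda>n. poch_ratio t u n / ((real n + 1) * (real n + 2)))"
    using summable_tele_term[of 0] by (simp add: tele_term_def tele_weight_0)
  moreover have "L = (1 + u + u * (t + u) * recip_pair_sum t u) / (1 - t)"
  proof -
    have "recip_pair_sum t u = ((1 - t) * L - (1 + u)) / (u * (t + u))"
      using X unfolding recip_pair_sum_def X_def[symmetric] by (simp add: sums_iff)
    moreover have "u * (t + u) \<noteq> 0" "1 - t \<noteq> 0"
      using u0 t0 t1 by auto
    ultimately show ?thesis by (simp add: field_simps)
  qed
  ultimately show "(\<lambda>n. poch_ratio t u n / ((real n + 1) * (real n + 2)))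
      sums ((1 + u + u * (t + u) * recip_pair_sum t u) / (1 - t))"
    unfolding L_def by (simp add: sums_iff)
qed

end

section \<open>Comparing coefficients\<close>

text \<open>The closed form of \<open>poch_ratio_series_sums\<close> at t = v x, u = v.\<close>

definition harm_gen_fun :: "real \<Rightarrow> real \<Rightarrow> real" where
  "harm_gen_fun v x = (1 + v + v * (v * x + v) * recip_pair_sum (v * x) v) / (1 - v * x)"

definition mixed_series :: "nat \<Rightarrow> real \<Rightarrow> real" where
  "mixed_series s x = (\<Sum>n. mixed_sym s n x / ((real n + 1) * (real n + 2)))"

lemma mixed_series_gen_fun:
  assumes x: "0 \<le> x" "x \<le> 1" and v: "0 < v" "v \<le> 1/4"
  shows "summable (\<lambda>n. mixed_sym s n x / ((real n + 1) * (real n + 2)))"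
    and "(\<lambda>s. mixed_series s x * v^s) sums harm_gen_fun v x"
proof -
  have "v * x \<le> v"
    using mult_left_le[of x v] x v by simp
  then have vx: "0 \<le> v * x" "v * x \<le> 1/4"
    using x v by (simp, linarith)
  note closed_form = poch_ratio_series_sums(2)[OF vx v]
  define f where "f = (\<lambda>n s. v^s * (mixed_sym s n x / ((real n + 1) * (real n + 2))))"
  have "(\<lambda>s. mixed_sym s n x * v^s / ((real n + 1) * (real n + 2)))
      sums (poch_ratio (v * x) v n / ((real n + 1) * (real n + 2)))" for n
    by (rule sums_divide[OF mixed_sym_sums]) (use x v in auto)
  then have row: "(\<lambda>s. f n s) sums (poch_ratio (v * x) v n / ((real n + 1) * (real n + 2)))" for n
    by (simp add: f_def mult.commute)
  have nonneg: "0 \<le> f n s" for n s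
    using mixed_sym_nonneg[OF x(1)] v by (simp add: f_def)
  note swap = sums_swap_nonneg[where f = f, OF nonneg row sums_summable[OF closed_form]]
  have summable: "summable (\<lambda>n. mixed_sym s' n x / ((real n + 1) * (real n + 2)))" for s'
    using swap(1)[of s'] v unfolding f_def by (subst (asm) summable_cmult_iff) simp
  then show "summable (\<lambda>n. mixed_sym s n x / ((real n + 1) * (real n + 2)))" .
  have "(\<Sum>n. f n s) = mixed_series s x * v^s" for s
    unfolding f_def mixed_series_def using suminf_mult[OF summable, of "v^s"] by (simp add: mult.commute)
  then show "(\<lambda>s. mixed_series s x * v^s) sums harm_gen_fun v x"
    using swap(2) closed_form by (simp add: harm_gen_fun_def sums_iff)
qed

definition harm_series :: "nat \<Rightarrow> nat \<Rightarrow> real" where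
  "harm_series k l = (\<Sum>n. esym_recip k n * hsym_recip l n / ((real n + 1) * (real n + 2)))"

lemma summable_harm_series:
  "summable (\<lambda>n. esym_recip k n * hsym_recip l n / ((real n + 1) * (real n + 2)))"
proof (rule summable_comparison_test'[OF mixed_series_gen_fun(1)[of 1 "1/4" "k + l"], of 0])
  fix n :: nat
  have "esym_recip k n * hsym_recip l n = (\<lambda>j. esym_recip j n * 1^j * hsym_recip (k + l - j) n) k"
    by simp
  also have "\<dots> \<le> mixed_sym (k + l) n 1"
    unfolding mixed_sym_def
    by (rule member_le_sum) (auto intro: mult_nonneg_nonneg esym_recip_nonneg hsym_recip_nonneg)
  finally show "norm (esym_recip k n * hsym_recip l n / ((real n + 1) * (real n + 2)))
      \<le> mixed_sym (k + l) n 1 / ((real n + 1) * (real n + 2))"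
    using esym_recip_nonneg[of k n] hsym_recip_nonneg[of l n] by (simp add: divide_right_mono)
qed simp_all

lemma mixed_series_eq: "mixed_series s x = (\<Sum>k\<le>s. harm_series k (s - k) * x^k)"
proof -
  have "mixed_series s x
      = (\<Sum>n. \<Sum>k\<le>s. x^k * (esym_recip k n * hsym_recip (s - k) n / ((real n + 1) * (real n + 2))))"
    unfolding mixed_series_def mixed_sym_def sum_divide_distrib by (intro suminf_cong sum.cong) auto
  also have "\<dots>
      = (\<Sum>k\<le>s. \<Sum>n. x^k * (esym_recip k n * hsym_recip (s - k) n / ((real n + 1) * (real n + 2))))"
    by (rule suminf_sum) (intro summable_mult summable_harm_series)
  also have "\<dots> = (\<Sum>k\<le>s. harm_series k (s - k) * x^k)"
    unfolding harm_series_def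
    by (intro sum.cong refl) (subst suminf_mult[OF summable_harm_series], simp add: mult.commute)
  finally show ?thesis .
qed

lemma summable_zeta_nat: "k \<ge> 2 \<Longrightarrow> summable (\<lambda>n. 1 / (real (Suc n))^k)"
  using inverse_power_summable[of k] by (subst summable_Suc_iff) (simp add: inverse_eq_divide)

lemma zeta_nat_nonneg: "k \<ge> 2 \<Longrightarrow> zeta_nat k \<ge> 0"
  unfolding zeta_nat_def by (rule suminf_nonneg[OF summable_zeta_nat]) auto

text \<open>Coefficient of v^s in 1 + v + v^2 (1 + x) recip_pair_sum (v x) v.\<close>

fun zeta_coeff :: "nat \<Rightarrow> real \<Rightarrow> real" where
  "zeta_coeff 0 x = 1"
| "zeta_coeff (Suc 0) x = 1"
| "zeta_coeff (Suc (Suc b)) x = (1 + x) * (\<Sum>j\<le>b. (1 + x)^j) * zeta_nat (b + 2)"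

lemma zeta_coeff_nonneg: "x \<ge> 0 \<Longrightarrow> zeta_coeff s x \<ge> 0"
  by (induction s x rule: zeta_coeff.induct) (auto intro!: mult_nonneg_nonneg sum_nonneg zeta_nat_nonneg)

lemma recip_pair_expansion:
  assumes x: "0 \<le> x" "x \<le> 1" and v: "0 \<le> v" "v \<le> 1/4"
  shows "(\<lambda>s. v^s * ((\<Sum>j\<le>s. (1 + x)^j) * (1 / (real m + 1)^(s + 2))))
           sums (1 / ((real m + 1 - v) * (real m + 1 - v - v * x)))"
proof -
  define M where "M = real m + 1"
  define p where "p = v * (1 + x) / M"
  define q where "q = v / M"
  have M: "M \<ge> 1" by (simp add: M_def)
  have "v * (1 + x) \<le> (1/4) * 2"
    using x v by (intro mult_mono) auto
  then have p: "\<bar>p\<bar> < 1" and q: "\<bar>q\<bar> < 1"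
    using M x v by (simp_all add: p_def q_def abs_divide divide_less_eq)
  have "(\<lambda>s. \<Sum>i\<le>s. p^i * q^(s - i)) sums ((\<Sum>i. p^i) * (\<Sum>i. q^i))"
    by (rule Cauchy_product_sums) (use p q in \<open>simp_all add: summable_geometric abs_mult power_abs\<close>)
  then have "(\<lambda>s. (\<Sum>i\<le>s. p^i * q^(s - i)) * (1 / M^2)) sums (1 / (1 - p) * (1 / (1 - q)) * (1 / M^2))"
    using p q by (intro sums_mult2) (simp add: suminf_geometric)
  moreover have "(\<Sum>i\<le>s. p^i * q^(s - i)) * (1 / M^2) = v^s * ((\<Sum>j\<le>s. (1 + x)^j) * (1 / M^(s + 2)))" for s
  proof -
    have "(\<Sum>i\<le>s. p^i * q^(s - i)) = (\<Sum>i\<le>s. v^s * (1 + x)^i / M^s)"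
      unfolding p_def q_def
      by (intro sum.cong refl) (simp add: power_divide power_mult_distrib flip: power_add)
    then show ?thesis
      using M by (simp add: sum_distrib_left sum_divide_distrib power_add field_simps power2_eq_square)
  qed
  moreover have "1 / (1 - p) * (1 / (1 - q)) * (1 / M^2)
      = 1 / ((real m + 1 - v) * (real m + 1 - v - v * x))"
    using M p q unfolding p_def q_def M_def[symmetric]
    by (simp add: divide_simps power2_eq_square) (simp add: algebra_simps)
  ultimately show ?thesis
    unfolding M_def by simp
qed

lemma recip_pair_sum_expansion:
  assumes x: "0 \<le> x" "x \<le> 1" and v: "0 < v" "v \<le> 1/4"
  shows "(\<lambda>s. v^s * (\<Sum>j\<le>s. (1 + x)^j) * zeta_nat (s + 2)) sums recip_pair_sum (v * x) v"
proof -
  have "v * x \<le> v"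
    using mult_left_le[of x v] x v by simp
  then have vx: "0 \<le> v * x" "v * x \<le> 1/4"
    using x v by (simp, linarith)
  define f where "f = (\<lambda>m s. v^s * ((\<Sum>j\<le>s. (1 + x)^j) * (1 / (real (Suc m))^(s + 2))))"
  have nonneg: "0 \<le> f m s" for m s
    unfolding f_def using x v by (intro mult_nonneg_nonneg sum_nonneg) auto
  have row: "(\<lambda>s. f m s) sums (1 / ((real m + 1 - v) * (real m + 1 - v - v * x)))" for m
    using recip_pair_expansion[OF x, of v m] v by (simp add: f_def add.commute)
  note swap = sums_swap_nonneg[where f = f, OF nonneg row poch_ratio_series_sums(1)[OF vx v]]
  have "(\<Sum>m. f m s) = v^s * (\<Sum>j\<le>s. (1 + x)^j) * zeta_nat (s + 2)" for s
    unfolding f_def zeta_nat_def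
    by (subst suminf_mult[OF summable_zeta_nat, symmetric]) (simp_all add: mult.assoc)
  moreover have "(\<Sum>m. 1 / ((real m + 1 - v) * (real m + 1 - v - v * x))) = recip_pair_sum (v * x) v"
    unfolding recip_pair_sum_def by (simp add: algebra_simps)
  ultimately show ?thesis
    using swap(2) by simp
qed

lemma zeta_coeff_sums:
  assumes x: "0 \<le> x" "x \<le> 1" and v: "0 < v" "v \<le> 1/4"
  shows "(\<lambda>s. zeta_coeff s x * v^s) sums (1 + v + v^2 * (1 + x) * recip_pair_sum (v * x) v)"
proof -
  have "(\<lambda>s. zeta_coeff (Suc (Suc s)) x * v^(Suc (Suc s)))
      sums (v^2 * (1 + x) * recip_pair_sum (v * x) v)"
    using sums_mult[OF recip_pair_sum_expansion[OF x v], of "v^2 * (1 + x)"]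
    by (simp add: power2_eq_square algebra_simps)
  then have "(\<lambda>s. zeta_coeff s x * v^s) sums (v^2 * (1 + x) * recip_pair_sum (v * x) v + v + 1)"
    by (subst (asm) sums_Suc_iff, subst (asm) sums_Suc_iff) simp
  then show ?thesis by (simp add: algebra_simps)
qed

definition zeta_series_coeff :: "nat \<Rightarrow> real \<Rightarrow> real" where
  "zeta_series_coeff s x = (\<Sum>a\<le>s. x^a * zeta_coeff (s - a) x)"

lemma zeta_series_coeff_gen_fun:
  assumes x: "0 \<le> x" "x \<le> 1" and v: "0 < v" "v \<le> 1/4"
  shows "(\<lambda>s. zeta_series_coeff s x * v^s) sums harm_gen_fun v x"
proof -
  have "0 \<le> v * x" "v * x \<le> v"
    using mult_left_le[of x v] x v by simp_all
  then have vx: "\<bar>v * x\<bar> < 1"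
    using v by (subst abs_of_nonneg) linarith+
  note zeta = zeta_coeff_sums[OF x v]
  have "(\<lambda>s. \<Sum>i\<le>s. (v * x)^i * (zeta_coeff (s - i) x * v^(s - i)))
      sums ((\<Sum>i. (v * x)^i) * (\<Sum>s. zeta_coeff s x * v^s))"
    by (rule Cauchy_product_sums)
       (use vx zeta zeta_coeff_nonneg[OF x(1)] v in \<open>simp_all add: summable_geometric power_abs sums_iff\<close>)
  moreover have "(\<Sum>i\<le>s. (v * x)^i * (zeta_coeff (s - i) x * v^(s - i))) = zeta_series_coeff s x * v^s" for s
    unfolding zeta_series_coeff_def sum_distrib_right
    by (intro sum.cong refl) (simp add: power_mult_distrib flip: power_add)
  moreover have "(\<Sum>i. (v * x)^i) = 1 / (1 - v * x)"
    using vx by (intro suminf_geometric) simp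
  moreover have "(\<Sum>s. zeta_coeff s x * v^s) = 1 + v + v^2 * (1 + x) * recip_pair_sum (v * x) v"
    using zeta by (simp add: sums_iff)
  ultimately show ?thesis
    unfolding harm_gen_fun_def by (simp add: power2_eq_square algebra_simps add_divide_distrib)
qed

definition harm_series_value :: "nat \<Rightarrow> nat \<Rightarrow> real" where
  "harm_series_value k l = (if l \<ge> 2 then
            (\<Sum>j=0..k. real ((k + l - j) choose (k + 1 - j)) * zeta_nat (k + l - j)) - zeta_nat l
          else if l = 1 then
            (\<Sum>j=0..<k. zeta_nat (k + 1 - j)) + 1
          else 1)"

lemma harm_series_value_Suc:
  "harm_series_value (Suc k) l
   = harm_series_value k l + real ((l + k + 1) choose (k + 2)) * zeta_nat (l + k + 1)"
proof -
  consider "l \<ge> 2" | "l = 1" | "l = 0" by linarith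
  then show ?thesis
  proof cases
    case 1
    have "(\<Sum>j=0..Suc k. real ((Suc k + l - j) choose (Suc k + 1 - j)) * zeta_nat (Suc k + l - j))
      = real ((Suc k + l) choose (Suc k + 1)) * zeta_nat (Suc k + l)
        + (\<Sum>j=0..k. real ((Suc k + l - Suc j) choose (Suc k + 1 - Suc j)) * zeta_nat (Suc k + l - Suc j))"
      by (subst sum.atLeast0_atMost_Suc_shift) simp
    also have "(\<Sum>j=0..k. real ((Suc k + l - Suc j) choose (Suc k + 1 - Suc j))
                    * zeta_nat (Suc k + l - Suc j))
       = (\<Sum>j=0..k. real ((k + l - j) choose (k + 1 - j)) * zeta_nat (k + l - j))"
      by (rule sum.cong) auto
    finally show ?thesis using 1 unfolding harm_series_value_def by (simp add: add_ac)
  next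
    case 2
    have "(\<Sum>j=0..<Suc k. zeta_nat (Suc k + 1 - j))
        = zeta_nat (Suc k + 1) + (\<Sum>j=0..<k. zeta_nat (Suc k + 1 - Suc j))"
      by (subst sum.atLeast0_lessThan_Suc_shift) simp
    also have "(\<Sum>j=0..<k. zeta_nat (Suc k + 1 - Suc j)) = (\<Sum>j=0..<k. zeta_nat (k + 1 - j))"
      by (rule sum.cong) auto
    finally show ?thesis using 2 unfolding harm_series_value_def by (simp add: add_ac)
  next
    case 3
    have "(l + k + 1) choose (k + 2) = 0" using 3 by (intro binomial_eq_0) simp
    then show ?thesis using 3 unfolding harm_series_value_def by (simp only:) simp
  qed
qed

lemma sum_power_Suc_binomial:
  "(\<Sum>j\<le>b. (1+x)^(Suc j)) = real (Suc b) + (\<Sum>k\<le>Suc b. real (Suc (Suc b) choose (k+2)) * x^(Suc k))"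
proof (induction b)
  case 0
  show ?case by (simp add: numeral_2_eq_2)
next
  case (Suc b)
  have bin: "(1+x)^(Suc (Suc b)) = 1 + (\<Sum>k\<le>Suc b. real (Suc (Suc b) choose (Suc k)) * x^(Suc k))"
  proof -
    have "(1+x)^(Suc (Suc b))
        = (\<Sum>i\<le>Suc (Suc b). real (Suc (Suc b) choose i) * x^i * 1^(Suc (Suc b) - i))"
      using binomial_ring[of x 1 "Suc (Suc b)"] by (simp add: add.commute)
    also have "\<dots> = 1 + (\<Sum>k\<le>Suc b. real (Suc (Suc b) choose (Suc k)) * x^(Suc k))"
      by (subst sum.atMost_Suc_shift) simp
    finally show ?thesis .
  qed
  have pas: "(\<Sum>k\<le>Suc (Suc b). real (Suc (Suc (Suc b)) choose (k+2)) * x^(Suc k))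
      = (\<Sum>k\<le>Suc (Suc b). real (Suc (Suc b) choose (Suc k)) * x^(Suc k))
        + (\<Sum>k\<le>Suc (Suc b). real (Suc (Suc b) choose (k+2)) * x^(Suc k))"
    unfolding sum.distrib[symmetric] by (rule sum.cong) (auto simp: algebra_simps numeral_2_eq_2)
  have e1: "(\<Sum>k\<le>Suc (Suc b). real (Suc (Suc b) choose (Suc k)) * x^(Suc k))
      = (\<Sum>k\<le>Suc b. real (Suc (Suc b) choose (Suc k)) * x^(Suc k))"
  proof -
    have z: "Suc (Suc b) choose (Suc (Suc (Suc b))) = 0" by (rule binomial_eq_0) simp
    show ?thesis by (subst sum.atMost_Suc) (simp only: z of_nat_0 mult_zero_left add_0_right)
  qed
  have e2: "(\<Sum>k\<le>Suc (Suc b). real (Suc (Suc b) choose (k+2)) * x^(Suc k))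
      = (\<Sum>k\<le>Suc b. real (Suc (Suc b) choose (k+2)) * x^(Suc k))"
  proof -
    have z: "Suc (Suc b) choose (Suc (Suc b) + 2) = 0" by (rule binomial_eq_0) simp
    show ?thesis by (subst sum.atMost_Suc) (simp only: z of_nat_0 mult_zero_left add_0_right)
  qed
  have "(\<Sum>j\<le>Suc b. (1+x)^(Suc j)) = (\<Sum>j\<le>b. (1+x)^(Suc j)) + (1+x)^(Suc (Suc b))"
    by simp
  also have "\<dots> = real (Suc b) + (\<Sum>k\<le>Suc b. real (Suc (Suc b) choose (k+2)) * x^(Suc k))
      + 1 + (\<Sum>k\<le>Suc b. real (Suc (Suc b) choose (Suc k)) * x^(Suc k))"
    unfolding Suc bin by simp
  also have "\<dots> = real (Suc (Suc b))
      + (\<Sum>k\<le>Suc (Suc b). real (Suc (Suc (Suc b)) choose (k+2)) * x^(Suc k))"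
    unfolding pas e1 e2 by simp
  finally show ?case .
qed

lemma harm_series_value_0: "harm_series_value 0 l = (if l \<ge> 2 then real (l - 1) * zeta_nat l else 1)"
  unfolding harm_series_value_def by (auto simp: algebra_simps of_nat_diff)

lemma zeta_coeff_Suc:
  "zeta_coeff (Suc s) x
   = harm_series_value 0 (Suc s) + zeta_nat (Suc s) * (\<Sum>k\<le>s. real (Suc s choose (k+2)) * x^(Suc k))"
proof (cases s)
  case 0
  then show ?thesis by (simp add: harm_series_value_0)
next
  case (Suc b)
  have "zeta_coeff (Suc s) x = (\<Sum>j\<le>b. (1+x)^(Suc j)) * zeta_nat (b + 2)"
    using Suc by (simp add: sum_distrib_left)
  also have "\<dots> = harm_series_value 0 (Suc s)
      + zeta_nat (Suc s) * (\<Sum>k\<le>s. real (Suc s choose (k+2)) * x^(Suc k))"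
    unfolding sum_power_Suc_binomial using Suc
    by (simp add: harm_series_value_0 algebra_simps numeral_2_eq_2)
  finally show ?thesis .
qed

lemma zeta_series_coeff_Suc:
  "zeta_series_coeff (Suc s) x = zeta_coeff (Suc s) x + x * zeta_series_coeff s x"
proof -
  have "zeta_series_coeff (Suc s) x
      = x^0 * zeta_coeff (Suc s - 0) x + (\<Sum>a\<le>s. x^(Suc a) * zeta_coeff (Suc s - Suc a) x)"
    unfolding zeta_series_coeff_def by (subst sum.atMost_Suc_shift) simp
  also have "(\<Sum>a\<le>s. x^(Suc a) * zeta_coeff (Suc s - Suc a) x) = x * zeta_series_coeff s x"
    unfolding zeta_series_coeff_def sum_distrib_left by (rule sum.cong) auto
  finally show ?thesis by simp
qed

lemma zeta_series_coeff_eq: "zeta_series_coeff s x = (\<Sum>k\<le>s. harm_series_value k (s - k) * x^k)"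
proof (induction s)
  case 0
  show ?case by (simp add: zeta_series_coeff_def harm_series_value_def)
next
  case (Suc s)
  have "(\<Sum>k\<le>Suc s. harm_series_value k (Suc s - k) * x^k)
      = harm_series_value 0 (Suc s) * x^0
        + (\<Sum>k\<le>s. harm_series_value (Suc k) (Suc s - Suc k) * x^(Suc k))"
    by (subst sum.atMost_Suc_shift) simp
  also have "(\<Sum>k\<le>s. harm_series_value (Suc k) (Suc s - Suc k) * x^(Suc k))
      = (\<Sum>k\<le>s. x * (harm_series_value k (s - k) * x^k)
                  + zeta_nat (Suc s) * (real (Suc s choose (k+2)) * x^(Suc k)))"
  proof (rule sum.cong[OF refl])
    fix k
    assume "k \<in> {..s}"
    then have "s - k + k + 1 = Suc s" by simp
    then show "harm_series_value (Suc k) (Suc s - Suc k) * x^(Suc k)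
        = x * (harm_series_value k (s - k) * x^k)
          + zeta_nat (Suc s) * (real (Suc s choose (k+2)) * x^(Suc k))"
      unfolding harm_series_value_Suc by (simp add: algebra_simps)
  qed
  also have "\<dots> = x * zeta_series_coeff s x
      + zeta_nat (Suc s) * (\<Sum>k\<le>s. real (Suc s choose (k+2)) * x^(Suc k))"
    unfolding sum.distrib Suc sum_distrib_left ..
  finally show ?case unfolding zeta_series_coeff_Suc zeta_coeff_Suc by simp
qed

lemma harm_series_eq_value: "harm_series k l = harm_series_value k l"
proof -
  define s where "s = k + l"
  have coeffs_eq: "mixed_series s x = zeta_series_coeff s x" if x: "0 < x" "x < 1" for x
  proof (rule powser_coeffs_unique[where d = "1/4" and F = "\<lambda>v. harm_gen_fun v x"
        and a = "\<lambda>s. mixed_series s x" and b = "\<lambda>s. zeta_series_coeff s x"])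
    fix v :: real
    assume v: "0 < v" "v < 1/4"
    show "(\<lambda>s. mixed_series s x * v^s) sums harm_gen_fun v x"
      by (rule mixed_series_gen_fun(2)) (use x v in auto)
    show "(\<lambda>s. zeta_series_coeff s x * v^s) sums harm_gen_fun v x"
      by (rule zeta_series_coeff_gen_fun) (use x v in auto)
  qed simp
  have "harm_series k (s - k) = harm_series_value k (s - k)"
  proof (rule polyfun_coeffs_unique[where s = s
        and p = "\<lambda>j. harm_series j (s - j)" and q = "\<lambda>j. harm_series_value j (s - j)"])
    fix x :: real
    assume "0 < x" "x < 1"
    then show "(\<Sum>j\<le>s. harm_series j (s - j) * x^j) = (\<Sum>j\<le>s. harm_series_value j (s - j) * x^j)"
      using coeffs_eq[of x] unfolding mixed_series_eq zeta_series_coeff_eq by simp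
  qed (simp add: s_def)
  then show ?thesis by (simp add: s_def)
qed

theorem theorem1:
  fixes k l :: nat
  shows "(\<lambda>n. Qpoly l (\<lambda>i. hnum i n) * Ppoly k (\<lambda>i. hnum i n)
               / (real (n + 1) * real (n + 2)))
         sums
         (if l \<ge> 2 then
            (\<Sum>j=0..k. real ((k + l - j) choose (k + 1 - j)) * zeta_nat (k + l - j)) - zeta_nat l
          else if l = 1 then
            (\<Sum>j=0..<k. zeta_nat (k + 1 - j)) + 1
          else 1)"
proof -
  have "(\<lambda>n. Qpoly l (\<lambda>i. hnum i n) * Ppoly k (\<lambda>i. hnum i n) / (real (n + 1) * real (n + 2)))
      = (\<lambda>n. esym_recip k n * hsym_recip l n / ((real n + 1) * (real n + 2)))"
    by (simp add: Ppoly_hnum Qpoly_hnum mult.commute add.commute)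
  moreover have "(\<lambda>n. esym_recip k n * hsym_recip l n / ((real n + 1) * (real n + 2)))
      sums harm_series k l"
    unfolding harm_series_def by (rule summable_sums[OF summable_harm_series])
  ultimately show ?thesis
    unfolding harm_series_eq_value harm_series_value_def by simp
qed

end
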